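(* Let $1\le i,j\le p$ and $e,e'\in\mathbb{F}_p$. Suppose $\varphi\colon B_{i,e}\to B_{j,e'}$ is a surjective group homomorphism compatible with the projections of both groups onto $G$ (so its kernel lies in the normal subgroup $A/A_i$ and it restricts to a $G$-equivariant surjection $A/A_i\to A/A_j$). Then $i>j$, $e'=0$, and $\ker\varphi=A_j/A_i$. Conversely, for every $i>j\ge1$ and every $e\in\mathbb{F}_p$, the quotient of $B_{i,e}$ by $A_j/A_i$ is $B_{j,0}$, giving such a surjection $B_{i,e}\to B_{j,0}$.
   Context: $p$ is an odd prime and $G=\langle\sigma\rangle$ is cyclic of order $p$. $A=\bigoplus_{k=0}^{p-1}\mathbb{F}_p\tau^k$ is the free $\mathbb{F}_p[G]$-module on $\tau$ with $\sigma$ acting by multiplication by $\tau$; for $1\le i<p$, $A_i$ is the $\mathbb{F}_p$-span of $(\tau-1)^k$, $i\le k\le p-1$, and $A_p=0$. For $1\le i\le p$ and $e\in\mathbb{F}_p$, $B_{i,e}$ denotes the group extension $1\to A/A_i\to B_{i,e}\to G\to1$ (with $A/A_i$ written additively as a normal subgroup) in which conjugation by a lift $\tilde\sigma$ of $\sigma$ acts on $A/A_i$ as multiplication by $\tau$ and $\tilde\sigma^p=e\,\overline{(\tau-1)}^{\,i-1}$; this determines $B_{i,e}$ up to equivalence. $B_{i,0}=(A/A_i)\rtimes G$. *)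

theory Defs
  imports "HOL-Algebra.Algebra"
begin

text \<open>Write u = tau - 1, so A = F_p[u]/(u^p) (as (tau-1)^p = tau^p - 1 in
characteristic p) and A_i = u^i A.  An element of A/A_i is encoded by its coordinate function
n \<mapsto> coefficient of u^n (values in {0..p-1}, zero for n \<ge> i).\<close>

definition Aquot :: "nat \<Rightarrow> nat \<Rightarrow> (nat \<Rightarrow> nat) set" where
  "Aquot p i = {a. (\<forall>n. a n < p) \<and> (\<forall>n\<ge>i. a n = 0)}"

definition addA :: "nat \<Rightarrow> (nat \<Rightarrow> nat) \<Rightarrow> (nat \<Rightarrow> nat) \<Rightarrow> (nat \<Rightarrow> nat)" where
  "addA p a b = (\<lambda>n. (a n + b n) mod p)"

text \<open>Multiplication by tau = 1 + u on A/A_i.\<close>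
definition tauA :: "nat \<Rightarrow> nat \<Rightarrow> (nat \<Rightarrow> nat) \<Rightarrow> (nat \<Rightarrow> nat)" where
  "tauA p i a = (\<lambda>n. if n < i then (a n + (if n = 0 then 0 else a (n - 1))) mod p else 0)"

definition cocyc :: "nat \<Rightarrow> nat \<Rightarrow> (nat \<Rightarrow> nat)" where
  "cocyc i e = (\<lambda>n. if n = i - 1 then e else 0)"

text \<open>B_{i,e}: the pair (a,k) stands for a * (lift of sigma)^k, 0 \<le> k < p.
  Conjugation by the lift acts as tau, and the p-th power of the lift is e u^(i-1).\<close>
definition multB :: "nat \<Rightarrow> nat \<Rightarrow> nat \<Rightarrow> ((nat \<Rightarrow> nat) \<times> nat) \<Rightarrow> ((nat \<Rightarrow> nat) \<times> nat) \<Rightarrow> ((nat \<Rightarrow> nat) \<times> nat)" where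
  "multB p i e x y =
     (addA p (addA p (fst x) ((tauA p i ^^ snd x) (fst y)))
         (if p \<le> snd x + snd y then cocyc i e else (\<lambda>_. 0)),
      (snd x + snd y) mod p)"

definition Bgrp :: "nat \<Rightarrow> nat \<Rightarrow> nat \<Rightarrow> ((nat \<Rightarrow> nat) \<times> nat) monoid" where
  "Bgrp p i e = \<lparr> carrier = Aquot p i \<times> {..<p}, monoid.mult = multB p i e,
     one = ((\<lambda>_. 0::nat), 0::nat) \<rparr>"

definition projG :: "((nat \<Rightarrow> nat) \<times> nat) \<Rightarrow> nat" where
  "projG x = snd x"

definition AjAi :: "nat \<Rightarrow> nat \<Rightarrow> nat \<Rightarrow> ((nat \<Rightarrow> nat) \<times> nat) set" where
  "AjAi p i j = {(a, 0) | a. a \<in> Aquot p i \<and> (\<forall>n<j. a n = 0)}"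

end

theory Submission
  imports Defs
begin

text \<open>Write u = tau - 1, so that A/A_i is F_p[u]/(u^i) and A_j/A_i = u^j A/A_i. A projection
compatible epimorphism phi restricts to an additive map f: A/A_i \<rightarrow> A/A_j commuting with tau,
hence with multiplication by u. Since 1 lies in the image of f, the constant term of f(1) is a
unit, and f(a) has the same constant term as a up to that unit. Peeling off powers of u, f(a)
vanishes exactly when the first j coordinates of a do, so ker phi = A_j/A_i, which is
nontrivial only if j < i.

To get e' = 0 compare p-th powers of the lift s of sigma. On the one hand s^p = e u^(i-1) lies in
A_j/A_i = ker phi. On the other hand phi(s) = b s' with s' the lift in B_{j,e'}, and
(b s')^p = (1 + tau + ... + tau^(p-1)) b + e' u^(j-1); the coefficients of
1 + tau + ... + tau^(p-1) = sum_k binom(p, k+1) u^k vanish mod p below u^(p-1), so for j < p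
the norm term dies and phi(s^p) = e' u^(j-1). Conversely, reduction modulo A_j is a
homomorphism B_{i,e} \<rightarrow> B_{j,0} because e u^(i-1) \<in> A_j when j < i.\<close>

lemma hom_funpow_left_mult:
  assumes h: "h \<in> hom G H" and x: "x \<in> carrier G" and y: "y \<in> carrier G"
    and closed: "\<And>z. z \<in> carrier G \<Longrightarrow> x \<otimes>\<^bsub>G\<^esub> z \<in> carrier G"
  shows "h (((\<lambda>z. x \<otimes>\<^bsub>G\<^esub> z) ^^ m) y) = ((\<lambda>z. h x \<otimes>\<^bsub>H\<^esub> z) ^^ m) (h y)"
proof (induction m)
  case 0
  then show ?case by simp
next
  case (Suc m)
  have "((\<lambda>z. x \<otimes>\<^bsub>G\<^esub> z) ^^ m) y \<in> carrier G"
    using y closed by (induction m) auto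
  then show ?case
    using Suc.IH hom_mult[OF h x] by simp
qed

lemma mod_add_right_cancel_less:
  fixes x y c p :: nat
  assumes "x < p" "y < p" "(x + c) mod p = (y + c) mod p"
  shows "x = y"
proof -
  have "int x mod int p = int y mod int p"
    using assms(3) by (metis of_nat_add of_nat_mod add_diff_cancel_right' mod_diff_left_eq)
  then show ?thesis
    using assms by (simp add: zmod_int[symmetric])
qed

section \<open>The module A/A_i\<close>

definition oneA :: "nat \<Rightarrow> nat" where
  "oneA = (\<lambda>n. if n = 0 then 1 else 0)"

definition smultA :: "nat \<Rightarrow> nat \<Rightarrow> (nat \<Rightarrow> nat) \<Rightarrow> nat \<Rightarrow> nat" where
  "smultA p c a = (\<lambda>n. (c * a n) mod p)"

definition shiftA :: "nat \<Rightarrow> (nat \<Rightarrow> nat) \<Rightarrow> nat \<Rightarrow> nat" where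
  "shiftA i a = (\<lambda>n. if 0 < n \<and> n < i then a (n - 1) else 0)"

definition unshiftA :: "(nat \<Rightarrow> nat) \<Rightarrow> nat \<Rightarrow> nat" where
  "unshiftA a = (\<lambda>n. a (Suc n))"

definition truncA :: "nat \<Rightarrow> (nat \<Rightarrow> nat) \<Rightarrow> nat \<Rightarrow> nat" where
  "truncA j a = (\<lambda>n. if n < j then a n else 0)"

lemma zero_in_Aquot: "0 < p \<Longrightarrow> (\<lambda>_. 0) \<in> Aquot p i"
  by (simp add: Aquot_def)

lemma oneA_in_Aquot: "1 < p \<Longrightarrow> 1 \<le> i \<Longrightarrow> oneA \<in> Aquot p i"
  by (simp add: Aquot_def oneA_def)

lemma cocyc_in_Aquot: "e < p \<Longrightarrow> 1 \<le> i \<Longrightarrow> cocyc i e \<in> Aquot p i"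
  by (simp add: Aquot_def cocyc_def)

lemma Aquot_modulus_pos: "a \<in> Aquot p i \<Longrightarrow> 0 < p"
  unfolding Aquot_def by (metis (mono_tags) gr_zeroI mem_Collect_eq not_less0)

lemma addA_in_Aquot: "a \<in> Aquot p i \<Longrightarrow> b \<in> Aquot p i \<Longrightarrow> addA p a b \<in> Aquot p i"
  using Aquot_modulus_pos by (simp add: Aquot_def addA_def)

lemma smultA_in_Aquot: "a \<in> Aquot p i \<Longrightarrow> smultA p c a \<in> Aquot p i"
  using Aquot_modulus_pos by (simp add: Aquot_def smultA_def)

lemma tauA_in_Aquot: "0 < p \<Longrightarrow> tauA p i a \<in> Aquot p i"
  by (simp add: Aquot_def tauA_def)

lemma funpow_tauA_in_Aquot: "0 < p \<Longrightarrow> a \<in> Aquot p i \<Longrightarrow> (tauA p i ^^ k) a \<in> Aquot p i"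
  by (induction k) (auto simp: tauA_in_Aquot)

lemma shiftA_in_Aquot: "a \<in> Aquot p i \<Longrightarrow> shiftA i a \<in> Aquot p i"
  by (force simp: Aquot_def shiftA_def)

lemma unshiftA_in_Aquot: "a \<in> Aquot p i \<Longrightarrow> unshiftA a \<in> Aquot p i"
  by (simp add: Aquot_def unshiftA_def)

lemma truncA_in_Aquot: "a \<in> Aquot p i \<Longrightarrow> truncA j a \<in> Aquot p j"
  by (force simp: Aquot_def truncA_def)

lemma Aquot_mono: "j \<le> i \<Longrightarrow> Aquot p j \<subseteq> Aquot p i"
  by (auto simp: Aquot_def)

lemma addA_commute: "addA p a b = addA p b a"
  by (simp add: addA_def add.commute)

lemma addA_zero_right: "a \<in> Aquot p i \<Longrightarrow> addA p a (\<lambda>_. 0) = a"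
  by (simp add: Aquot_def addA_def)

lemma addA_zero_left: "a \<in> Aquot p i \<Longrightarrow> addA p (\<lambda>_. 0) a = a"
  by (simp add: Aquot_def addA_def)

lemma addA_right_cancel:
  assumes "a \<in> Aquot p i" "b \<in> Aquot p i" "addA p a c = addA p b c"
  shows "a = b"
proof
  fix n
  have "(a n + c n) mod p = (b n + c n) mod p"
    using assms(3) unfolding addA_def by meson
  then show "a n = b n"
    using assms(1,2) by (intro mod_add_right_cancel_less[of "a n" p "b n" "c n"]) (simp_all add: Aquot_def)
qed

lemma smultA_0: "smultA p 0 a = (\<lambda>_. 0)"
  by (simp add: smultA_def fun_eq_iff)

lemma smultA_Suc: "smultA p (Suc c) a = addA p (smultA p c a) a"
  by (simp add: smultA_def addA_def fun_eq_iff mod_add_right_eq add.commute)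

lemma tauA_eq_addA_shiftA: "a \<in> Aquot p i \<Longrightarrow> tauA p i a = addA p a (shiftA i a)"
  by (auto simp: Aquot_def tauA_def addA_def shiftA_def fun_eq_iff)

lemma Aquot_decompose:
  "a \<in> Aquot p i \<Longrightarrow> 1 \<le> i \<Longrightarrow> a = addA p (smultA p (a 0) oneA) (shiftA i (unshiftA a))"
  by (auto simp: Aquot_def addA_def smultA_def oneA_def shiftA_def unshiftA_def fun_eq_iff)

lemma shiftA_unshiftA: "a \<in> Aquot p i \<Longrightarrow> a 0 = 0 \<Longrightarrow> shiftA i (unshiftA a) = a"
  by (auto simp: Aquot_def shiftA_def unshiftA_def fun_eq_iff)

lemma shiftA_low_coeffs_eq_0_iff:
  "Suc n \<le> j \<Longrightarrow> (\<forall>m<Suc n. shiftA j b m = 0) \<longleftrightarrow> (\<forall>m<n. b m = 0)"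
  by (auto simp: All_less_Suc2 shiftA_def)

section \<open>Equivariant epimorphisms A/A_i \<rightarrow> A/A_j\<close>

locale Aquot_epi =
  fixes p i j :: nat and f :: "(nat \<Rightarrow> nat) \<Rightarrow> nat \<Rightarrow> nat"
  assumes prime: "Factorial_Ring.prime p" and i_pos: "1 \<le> i" and j_pos: "1 \<le> j"
    and onto: "f ` Aquot p i = Aquot p j"
    and additive: "\<lbrakk>a \<in> Aquot p i; b \<in> Aquot p i\<rbrakk> \<Longrightarrow> f (addA p a b) = addA p (f a) (f b)"
    and equivariant: "a \<in> Aquot p i \<Longrightarrow> f (tauA p i a) = tauA p j (f a)"
begin

lemma p_gt_1: "1 < p"
  using prime prime_gt_1_nat by blast

lemma maps_to: "a \<in> Aquot p i \<Longrightarrow> f a \<in> Aquot p j"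
  using onto by blast

lemma map_zero: "f (\<lambda>_. 0) = (\<lambda>_. 0)"
proof -
  have z: "(\<lambda>_. 0) \<in> Aquot p i" "(\<lambda>_. 0) \<in> Aquot p j" "f (\<lambda>_. 0) \<in> Aquot p j"
    using zero_in_Aquot p_gt_1 maps_to by auto
  have "addA p (f (\<lambda>_. 0)) (f (\<lambda>_. 0)) = addA p (\<lambda>_. 0) (f (\<lambda>_. 0))"
    using additive[OF z(1) z(1)] z by (simp add: addA_zero_right addA_zero_left)
  then show ?thesis
    using addA_right_cancel z(2,3) by blast
qed

lemma map_smultA: "a \<in> Aquot p i \<Longrightarrow> f (smultA p c a) = smultA p c (f a)"
proof (induction c)
  case 0
  then show ?case by (simp add: smultA_0 map_zero)
next
  case (Suc c)
  then show ?case
    using additive[OF smultA_in_Aquot Suc.prems] by (simp add: smultA_Suc)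
qed

lemma map_shiftA: "a \<in> Aquot p i \<Longrightarrow> f (shiftA i a) = shiftA j (f a)"
proof -
  assume a: "a \<in> Aquot p i"
  have "addA p (f (shiftA i a)) (f a) = f (tauA p i a)"
    using tauA_eq_addA_shiftA[OF a] additive[OF a shiftA_in_Aquot[OF a]] by (simp add: addA_commute)
  also have "\<dots> = addA p (shiftA j (f a)) (f a)"
    using equivariant[OF a] tauA_eq_addA_shiftA[OF maps_to[OF a]] by (simp add: addA_commute)
  finally show ?thesis
    using addA_right_cancel maps_to shiftA_in_Aquot a by metis
qed

lemma map_coeff_0: "a \<in> Aquot p i \<Longrightarrow> f a 0 = (a 0 * f oneA 0) mod p"
proof -
  assume a: "a \<in> Aquot p i"
  have one: "oneA \<in> Aquot p i"
    using oneA_in_Aquot p_gt_1 i_pos by blast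
  have a': "unshiftA a \<in> Aquot p i"
    using a by (rule unshiftA_in_Aquot)
  have "f a = f (addA p (smultA p (a 0) oneA) (shiftA i (unshiftA a)))"
    using Aquot_decompose[OF a i_pos] by (rule arg_cong)
  also have "\<dots> = addA p (smultA p (a 0) (f oneA)) (shiftA j (f (unshiftA a)))"
    using additive[OF smultA_in_Aquot[OF one] shiftA_in_Aquot[OF a']]
      map_smultA[OF one] map_shiftA[OF a'] by simp
  finally show ?thesis
    by (simp add: addA_def smultA_def shiftA_def)
qed

lemma map_coeff_0_eq_0_iff: "a \<in> Aquot p i \<Longrightarrow> f a 0 = 0 \<longleftrightarrow> a 0 = 0"
proof -
  assume a: "a \<in> Aquot p i"
  have "oneA \<in> Aquot p j"
    using oneA_in_Aquot p_gt_1 j_pos by blast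
  then obtain b where "b \<in> Aquot p i" "f b = oneA"
    using onto by (metis imageE)
  then have "(b 0 * f oneA 0) mod p = 1"
    using map_coeff_0 by (metis oneA_def)
  then have "\<not> p dvd f oneA 0"
    using p_gt_1 by (metis dvd_mult mod_eq_0_iff_dvd zero_neq_one)
  moreover have "a 0 < p"
    using a by (simp add: Aquot_def)
  ultimately show ?thesis
    using map_coeff_0[OF a] prime
    by (auto simp: prime_dvd_mult_iff dvd_eq_mod_eq_0[symmetric] dest: dvd_imp_le)
qed

lemma low_coeffs_map_eq_0_iff:
  "n \<le> j \<Longrightarrow> a \<in> Aquot p i \<Longrightarrow> (\<forall>m<n. f a m = 0) \<longleftrightarrow> (\<forall>m<n. a m = 0)"
proof (induction n arbitrary: a)
  case 0
  then show ?case by simp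
next
  case (Suc n)
  show ?case
  proof (cases "a 0 = 0")
    case True
    have a': "unshiftA a \<in> Aquot p i"
      using Suc.prems(2) by (rule unshiftA_in_Aquot)
    have fa: "f a = shiftA j (f (unshiftA a))"
      using map_shiftA[OF a'] shiftA_unshiftA[OF Suc.prems(2) True] by simp
    have "(\<forall>m<Suc n. f a m = 0) \<longleftrightarrow> (\<forall>m<n. f (unshiftA a) m = 0)"
      unfolding fa using Suc.prems(1) by (rule shiftA_low_coeffs_eq_0_iff)
    also have "\<dots> \<longleftrightarrow> (\<forall>m<n. unshiftA a m = 0)"
      using Suc.IH[OF _ a'] Suc.prems(1) by simp
    finally show ?thesis
      using True by (simp add: All_less_Suc2 unshiftA_def)
  next
    case False
    then show ?thesis
      using map_coeff_0_eq_0_iff[OF Suc.prems(2)] by (simp add: All_less_Suc2)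
  qed
qed

lemma map_eq_0_iff: "a \<in> Aquot p i \<Longrightarrow> f a = (\<lambda>_. 0) \<longleftrightarrow> (\<forall>m<j. a m = 0)"
proof -
  assume a: "a \<in> Aquot p i"
  have "\<forall>m\<ge>j. f a m = 0"
    using maps_to[OF a] by (simp add: Aquot_def)
  then have "f a = (\<lambda>_. 0) \<longleftrightarrow> (\<forall>m<j. f a m = 0)"
    by (auto simp: fun_eq_iff) (meson leI)
  then show ?thesis
    using low_coeffs_map_eq_0_iff[OF order.refl a] by simp
qed

end

section \<open>The groups B_{i,e}\<close>

lemma carrier_Bgrp: "carrier (Bgrp p i e) = Aquot p i \<times> {..<p}"
  by (simp add: Bgrp_def)

lemma mult_Bgrp: "x \<otimes>\<^bsub>Bgrp p i e\<^esub> y = multB p i e x y"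
  by (simp add: Bgrp_def)

lemma one_Bgrp: "\<one>\<^bsub>Bgrp p i e\<^esub> = (\<lambda>_. 0, 0)"
  by (simp add: Bgrp_def)

lemma multB_Aquot_left: "k < p \<Longrightarrow> multB p i e (a, 0) (b, k) = (addA p a b, k)"
  by (simp add: multB_def addA_def)

lemma multB_lift_left: "1 < p \<Longrightarrow> multB p i e (b, 1) (a, 0) = (addA p b (tauA p i a), 1)"
  by (simp add: multB_def addA_def)

lemma multB_in_carrier:
  assumes "e < p" "1 \<le> i" "x \<in> carrier (Bgrp p i e)" "y \<in> carrier (Bgrp p i e)"
  shows "multB p i e x y \<in> carrier (Bgrp p i e)"
  using assms
  by (cases x, cases y)
    (auto simp: carrier_Bgrp multB_def intro!: addA_in_Aquot funpow_tauA_in_Aquot cocyc_in_Aquot zero_in_Aquot)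

text \<open>(b, 1)^m = (b + tau b + ... + tau^(m-1) b, m) for m < p, and
  1 + tau + ... + tau^(m-1) = sum_k binom(m, k+1) u^k.\<close>

definition norm_coeff :: "(nat \<Rightarrow> nat) \<Rightarrow> nat \<Rightarrow> nat \<Rightarrow> nat" where
  "norm_coeff b m n = (\<Sum>k\<le>n. (m choose Suc k) * b (n - k))"

definition partial_norm :: "nat \<Rightarrow> nat \<Rightarrow> (nat \<Rightarrow> nat) \<Rightarrow> nat \<Rightarrow> nat \<Rightarrow> nat" where
  "partial_norm p j b m = (\<lambda>n. if n < j then norm_coeff b m n mod p else 0)"

lemma norm_coeff_Suc:
  "norm_coeff b (Suc m) n = norm_coeff b m n + b n + (if n = 0 then 0 else norm_coeff b m (n - 1))"
proof -
  have "norm_coeff b (Suc m) n = norm_coeff b m n + (\<Sum>k\<le>n. (m choose k) * b (n - k))"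
    by (simp add: norm_coeff_def sum.distrib algebra_simps)
  also have "(\<Sum>k\<le>n. (m choose k) * b (n - k)) = b n + (if n = 0 then 0 else norm_coeff b m (n - 1))"
  proof (cases n)
    case (Suc n')
    then show ?thesis
      by (simp add: norm_coeff_def sum.atMost_Suc_shift del: sum.atMost_Suc)
  qed simp
  finally show ?thesis
    by simp
qed

lemma partial_norm_0: "partial_norm p j b 0 = (\<lambda>_. 0)"
  by (simp add: partial_norm_def norm_coeff_def fun_eq_iff)

lemma partial_norm_Suc:
  assumes "b \<in> Aquot p j"
  shows "addA p b (tauA p j (partial_norm p j b m)) = partial_norm p j b (Suc m)"
proof
  fix n
  show "addA p b (tauA p j (partial_norm p j b m)) n = partial_norm p j b (Suc m) n"
    using assms
    by (cases n) (auto simp: addA_def tauA_def partial_norm_def norm_coeff_Suc Aquot_def mod_simps ac_simps)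
qed

lemma partial_norm_of_zero: "partial_norm p j (\<lambda>_. 0) m = (\<lambda>_. 0)"
  by (simp add: partial_norm_def norm_coeff_def fun_eq_iff)

lemma partial_norm_p:
  assumes "Factorial_Ring.prime p" "j < p"
  shows "partial_norm p j b p = (\<lambda>_. 0)"
proof -
  have "p dvd norm_coeff b p n" if "n < j" for n
    unfolding norm_coeff_def
  proof (intro dvd_sum)
    fix k assume "k \<in> {..n}"
    then have "Suc k < p"
      using that assms(2) by simp
    then show "p dvd (p choose Suc k) * b (n - k)"
      using assms(1) by (simp add: dvd_choose_prime)
  qed
  then show ?thesis
    by (simp add: partial_norm_def fun_eq_iff)
qed

lemma lift_power_less:
  assumes "1 < p" "b \<in> Aquot p j" "m < p"
  shows "(multB p j e (b, 1) ^^ m) (\<lambda>_. 0, 0) = (partial_norm p j b m, m)"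
  using assms(3)
proof (induction m)
  case 0
  then show ?case by (simp add: partial_norm_0)
next
  case (Suc m)
  then show ?case
    using partial_norm_Suc[OF assms(2), of m] by (simp add: multB_def addA_def)
qed

lemma lift_power_p:
  assumes "1 < p" "b \<in> Aquot p j"
  shows "(multB p j e (b, 1) ^^ p) (\<lambda>_. 0, 0) = (addA p (partial_norm p j b p) (cocyc j e), 0)"
proof -
  obtain q where q: "p = Suc q"
    using assms(1) by (cases p) auto
  then show ?thesis
    using lift_power_less[OF assms, of q] partial_norm_Suc[OF assms(2), of q] by (simp add: multB_def)
qed

section \<open>Epimorphisms B_{i,e} \<rightarrow> B_{j,e'} over G\<close>

lemma AjAi_trivial: "0 < p \<Longrightarrow> i \<le> j \<Longrightarrow> AjAi p i j = {(\<lambda>_. 0, 0)}"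
  by (auto simp: AjAi_def Aquot_def fun_eq_iff) (meson leI order.trans)

locale Bgrp_epi =
  fixes p i j e e' :: nat and \<phi> :: "(nat \<Rightarrow> nat) \<times> nat \<Rightarrow> (nat \<Rightarrow> nat) \<times> nat"
  assumes prime: "Factorial_Ring.prime p"
    and i_pos: "1 \<le> i" and i_le: "i \<le> p" and j_pos: "1 \<le> j"
    and e_less: "e < p" and e'_less: "e' < p"
    and hom: "\<phi> \<in> hom (Bgrp p i e) (Bgrp p j e')"
    and onto: "\<phi> ` carrier (Bgrp p i e) = carrier (Bgrp p j e')"
    and proj: "\<forall>x \<in> carrier (Bgrp p i e). projG (\<phi> x) = projG x"
begin

lemma p_gt_1: "1 < p"
  using prime prime_gt_1_nat by blast

lemma map_mult:
  "x \<in> carrier (Bgrp p i e) \<Longrightarrow> y \<in> carrier (Bgrp p i e) \<Longrightarrow>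
    \<phi> (multB p i e x y) = multB p j e' (\<phi> x) (\<phi> y)"
  using hom_mult[OF hom] by (simp add: mult_Bgrp)

definition restrA :: "(nat \<Rightarrow> nat) \<Rightarrow> nat \<Rightarrow> nat" where
  "restrA a = fst (\<phi> (a, 0))"

lemma map_Aquot: "a \<in> Aquot p i \<Longrightarrow> \<phi> (a, 0) = (restrA a, 0)"
  and restrA_in_Aquot: "a \<in> Aquot p i \<Longrightarrow> restrA a \<in> Aquot p j"
proof -
  assume "a \<in> Aquot p i"
  then have a: "(a, 0) \<in> carrier (Bgrp p i e)"
    using p_gt_1 by (simp add: carrier_Bgrp)
  show "\<phi> (a, 0) = (restrA a, 0)" "restrA a \<in> Aquot p j"
    using proj[rule_format, OF a] hom_in_carrier[OF hom a]
    by (auto simp: restrA_def projG_def carrier_Bgrp prod_eq_iff)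
qed

lemma map_lift: obtains b where "b \<in> Aquot p j" "\<phi> (\<lambda>_. 0, 1) = (b, 1)"
proof -
  have s: "(\<lambda>_. 0, 1) \<in> carrier (Bgrp p i e)"
    using p_gt_1 zero_in_Aquot by (simp add: carrier_Bgrp)
  then show ?thesis
    using that proj[rule_format, OF s] hom_in_carrier[OF hom s]
    by (auto simp: projG_def carrier_Bgrp prod_eq_iff)
qed

lemma restrA_image: "restrA ` Aquot p i = Aquot p j"
proof (intro equalityI subsetI)
  fix b assume "b \<in> Aquot p j"
  then have "(b, 0) \<in> \<phi> ` carrier (Bgrp p i e)"
    using onto p_gt_1 by (simp add: carrier_Bgrp)
  then obtain a k where ak: "(a, k) \<in> carrier (Bgrp p i e)" "\<phi> (a, k) = (b, 0)"
    by auto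
  then have "k = 0"
    using proj[rule_format, OF ak(1)] by (simp add: projG_def)
  then show "b \<in> restrA ` Aquot p i"
    using ak by (intro image_eqI[of _ _ a]) (auto simp: restrA_def carrier_Bgrp)
qed (use restrA_in_Aquot in auto)

lemma restrA_addA:
  assumes a: "a \<in> Aquot p i" and b: "b \<in> Aquot p i"
  shows "restrA (addA p a b) = addA p (restrA a) (restrA b)"
proof -
  have "\<phi> (multB p i e (a, 0) (b, 0)) = multB p j e' (\<phi> (a, 0)) (\<phi> (b, 0))"
    using a b p_gt_1 by (simp add: map_mult carrier_Bgrp)
  then show ?thesis
    using map_Aquot[OF a] map_Aquot[OF b] map_Aquot[OF addA_in_Aquot[OF a b]] p_gt_1
    by (simp add: multB_Aquot_left)
qed

lemma restrA_tauA:
  assumes a: "a \<in> Aquot p i"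
  shows "restrA (tauA p i a) = tauA p j (restrA a)"
proof -
  obtain b where b: "b \<in> Aquot p j" "\<phi> (\<lambda>_. 0, 1) = (b, 1)"
    using map_lift .
  have ta: "tauA p i a \<in> Aquot p i"
    using tauA_in_Aquot p_gt_1 by simp
  have c: "(\<lambda>_. 0, 1) \<in> carrier (Bgrp p i e)" "(a, 0) \<in> carrier (Bgrp p i e)"
    "(tauA p i a, 0) \<in> carrier (Bgrp p i e)"
    using a ta p_gt_1 zero_in_Aquot by (simp_all add: carrier_Bgrp)
  have "multB p i e (\<lambda>_. 0, 1) (a, 0) = multB p i e (tauA p i a, 0) (\<lambda>_. 0, 1)"
    using multB_lift_left[OF p_gt_1] multB_Aquot_left[OF p_gt_1] a ta
    by (simp add: addA_zero_left addA_zero_right)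
  then have "multB p j e' (b, 1) (\<phi> (a, 0)) = multB p j e' (\<phi> (tauA p i a, 0)) (b, 1)"
    using map_mult[OF c(1,2)] map_mult[OF c(3,1)] b(2) by simp
  then have "addA p (tauA p j (restrA a)) b = addA p (restrA (tauA p i a)) b"
    using map_Aquot[OF a] map_Aquot[OF ta] multB_lift_left[OF p_gt_1] multB_Aquot_left[OF p_gt_1]
    by (simp add: addA_commute)
  then show ?thesis
    using addA_right_cancel tauA_in_Aquot restrA_in_Aquot[OF ta] p_gt_1 by (metis less_trans zero_less_one)
qed

sublocale Aquot_epi p i j restrA
  using prime i_pos j_pos restrA_image restrA_addA restrA_tauA by unfold_locales

lemma kernel_eq_AjAi: "kernel (Bgrp p i e) (Bgrp p j e') \<phi> = AjAi p i j"
proof (intro equalityI subsetI)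
  fix x assume "x \<in> kernel (Bgrp p i e) (Bgrp p j e') \<phi>"
  then obtain a k where ak: "x = (a, k)" "a \<in> Aquot p i" "k < p" "\<phi> (a, k) = (\<lambda>_. 0, 0)"
    by (cases x) (auto simp: kernel_def carrier_Bgrp one_Bgrp)
  then have "k = 0"
    using proj[rule_format, of "(a, k)"] p_gt_1 by (simp add: projG_def carrier_Bgrp)
  then show "x \<in> AjAi p i j"
    using ak map_Aquot map_eq_0_iff by (auto simp: AjAi_def)
next
  fix x assume "x \<in> AjAi p i j"
  then obtain a where "x = (a, 0)" "a \<in> Aquot p i" "\<forall>m<j. a m = 0"
    by (auto simp: AjAi_def)
  then show "x \<in> kernel (Bgrp p i e) (Bgrp p j e') \<phi>"
    using map_Aquot map_eq_0_iff p_gt_1 by (auto simp: kernel_def carrier_Bgrp one_Bgrp)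
qed

lemma j_less_i: "kernel (Bgrp p i e) (Bgrp p j e') \<phi> \<noteq> {\<one>\<^bsub>Bgrp p i e\<^esub>} \<Longrightarrow> j < i"
  using kernel_eq_AjAi AjAi_trivial[of p i j] p_gt_1 by (force simp: one_Bgrp)

lemma e'_eq_0:
  assumes "j < i"
  shows "e' = 0"
proof -
  have lift: "(\<lambda>_. 0, 1) \<in> carrier (Bgrp p i e)" and unit: "(\<lambda>_. 0, 0) \<in> carrier (Bgrp p i e)"
    using p_gt_1 zero_in_Aquot by (simp_all add: carrier_Bgrp)
  obtain b where b: "b \<in> Aquot p j" "\<phi> (\<lambda>_. 0, 1) = (b, 1)"
    using map_lift .
  have "\<phi> ((multB p i e (\<lambda>_. 0, 1) ^^ p) (\<lambda>_. 0, 0)) = (multB p j e' (b, 1) ^^ p) (\<lambda>_. 0, 0)"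
    using hom_funpow_left_mult[OF hom lift unit] multB_in_carrier[OF e_less i_pos lift]
      map_Aquot[OF zero_in_Aquot] map_zero b(2) p_gt_1
    by (simp add: mult_Bgrp)
  moreover have "(multB p i e (\<lambda>_. 0, 1) ^^ p) (\<lambda>_. 0, 0) = (cocyc i e, 0)"
    using lift_power_p[OF p_gt_1 zero_in_Aquot] partial_norm_of_zero
      addA_zero_left[OF cocyc_in_Aquot[OF e_less i_pos]] p_gt_1 by simp
  moreover have "\<phi> (cocyc i e, 0) = (\<lambda>_. 0, 0)"
    using map_Aquot map_eq_0_iff cocyc_in_Aquot[OF e_less i_pos] assms by (simp add: cocyc_def)
  moreover have "(multB p j e' (b, 1) ^^ p) (\<lambda>_. 0, 0) = (cocyc j e', 0)"
    using lift_power_p[OF p_gt_1 b(1)] partial_norm_p[OF prime] assms i_le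
      addA_zero_left[OF cocyc_in_Aquot[OF e'_less j_pos]] by simp
  ultimately have "cocyc j e' = (\<lambda>_. 0)"
    by simp
  then have "cocyc j e' (j - 1) = 0"
    by simp
  then show ?thesis
    by (simp add: cocyc_def)
qed

end

section \<open>Reduction modulo A_j\<close>

definition truncB :: "nat \<Rightarrow> (nat \<Rightarrow> nat) \<times> nat \<Rightarrow> (nat \<Rightarrow> nat) \<times> nat" where
  "truncB j x = (truncA j (fst x), snd x)"

lemma truncA_addA: "truncA j (addA p a b) = addA p (truncA j a) (truncA j b)"
  by (simp add: truncA_def addA_def fun_eq_iff)

lemma truncA_tauA: "j \<le> i \<Longrightarrow> truncA j (tauA p i a) = tauA p j (truncA j a)"
  by (auto simp: truncA_def tauA_def fun_eq_iff)

lemma truncA_funpow_tauA: "j \<le> i \<Longrightarrow> truncA j ((tauA p i ^^ k) a) = (tauA p j ^^ k) (truncA j a)"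
  by (induction k) (simp_all add: truncA_tauA)

lemma truncA_zero: "truncA j (\<lambda>_. 0) = (\<lambda>_. 0)"
  by (simp add: truncA_def fun_eq_iff)

lemma truncA_cocyc: "j < i \<Longrightarrow> truncA j (cocyc i e) = (\<lambda>_. 0)"
  by (auto simp: truncA_def cocyc_def fun_eq_iff)

lemma cocyc_zero: "cocyc j 0 = (\<lambda>_. 0)"
  by (simp add: cocyc_def fun_eq_iff)

lemma truncB_hom: "j < i \<Longrightarrow> truncB j \<in> hom (Bgrp p i e) (Bgrp p j 0)"
  by (rule homI)
    (auto simp: carrier_Bgrp mult_Bgrp truncB_def multB_def truncA_in_Aquot truncA_addA
      truncA_funpow_tauA truncA_cocyc truncA_zero cocyc_zero)

lemma truncB_image: "j \<le> i \<Longrightarrow> truncB j ` carrier (Bgrp p i e) = carrier (Bgrp p j e')"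
proof (intro equalityI subsetI)
  fix y assume y: "y \<in> carrier (Bgrp p j e')"
  then have "truncB j y = y"
    by (auto simp: carrier_Bgrp Aquot_def truncB_def truncA_def fun_eq_iff prod_eq_iff)
  moreover assume "j \<le> i"
  then have "y \<in> carrier (Bgrp p i e)"
    using y Aquot_mono by (auto simp: carrier_Bgrp)
  ultimately show "y \<in> truncB j ` carrier (Bgrp p i e)"
    by (metis image_eqI)
qed (auto simp: carrier_Bgrp truncB_def truncA_in_Aquot)

lemma truncB_kernel: "0 < p \<Longrightarrow> kernel (Bgrp p i e) (Bgrp p j e') (truncB j) = AjAi p i j"
  by (auto simp: kernel_def carrier_Bgrp one_Bgrp AjAi_def truncB_def truncA_def fun_eq_iff)

theorem lemma2:
  fixes p :: nat
  assumes "Factorial_Ring.prime p" and "odd p"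
  shows "(\<forall>i j e e' (\<phi> :: (nat \<Rightarrow> nat) \<times> nat \<Rightarrow> (nat \<Rightarrow> nat) \<times> nat).
            1 \<le> i \<and> i \<le> p \<and> 1 \<le> j \<and> j \<le> p \<and> e < p \<and> e' < p
            \<and> \<phi> \<in> hom (Bgrp p i e) (Bgrp p j e')
            \<and> \<phi> ` carrier (Bgrp p i e) = carrier (Bgrp p j e')
            \<and> (\<forall>x \<in> carrier (Bgrp p i e). projG (\<phi> x) = projG x)
            \<and> kernel (Bgrp p i e) (Bgrp p j e') \<phi> \<noteq> {\<one>\<^bsub>Bgrp p i e\<^esub>}
          \<longrightarrow> j < i \<and> e' = 0 \<and> kernel (Bgrp p i e) (Bgrp p j e') \<phi> = AjAi p i j)
       \<and> (\<forall>i j e. 1 \<le> j \<and> j < i \<and> i \<le> p \<and> e < p \<longrightarrow>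
            (\<exists>\<phi>. \<phi> \<in> hom (Bgrp p i e) (Bgrp p j 0)
               \<and> \<phi> ` carrier (Bgrp p i e) = carrier (Bgrp p j 0)
               \<and> (\<forall>x \<in> carrier (Bgrp p i e). projG (\<phi> x) = projG x)
               \<and> kernel (Bgrp p i e) (Bgrp p j 0) \<phi> = AjAi p i j))"
proof (rule conjI; intro allI impI; elim conjE)
  fix i j e e' and \<phi> :: "(nat \<Rightarrow> nat) \<times> nat \<Rightarrow> (nat \<Rightarrow> nat) \<times> nat"
  assume "1 \<le> i" "i \<le> p" "1 \<le> j" "j \<le> p" "e < p" "e' < p"
    "\<phi> \<in> hom (Bgrp p i e) (Bgrp p j e')" "\<phi> ` carrier (Bgrp p i e) = carrier (Bgrp p j e')"
    "\<forall>x \<in> carrier (Bgrp p i e). projG (\<phi> x) = projG x"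
    and nontrivial: "kernel (Bgrp p i e) (Bgrp p j e') \<phi> \<noteq> {\<one>\<^bsub>Bgrp p i e\<^esub>}"
  then interpret Bgrp_epi p i j e e' \<phi>
    using assms(1) by unfold_locales
  have "j < i"
    using nontrivial by (rule j_less_i)
  then show "j < i \<and> e' = 0 \<and> kernel (Bgrp p i e) (Bgrp p j e') \<phi> = AjAi p i j"
    using e'_eq_0 kernel_eq_AjAi by blast
next
  fix i j e :: nat
  assume "1 \<le> j" "j < i" "i \<le> p" "e < p"
  then show "\<exists>\<phi>. \<phi> \<in> hom (Bgrp p i e) (Bgrp p j 0)
               \<and> \<phi> ` carrier (Bgrp p i e) = carrier (Bgrp p j 0)
               \<and> (\<forall>x \<in> carrier (Bgrp p i e). projG (\<phi> x) = projG x)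
               \<and> kernel (Bgrp p i e) (Bgrp p j 0) \<phi> = AjAi p i j"
    using truncB_hom truncB_image truncB_kernel prime_gt_0_nat[OF assms(1)]
    by (intro exI[of _ "truncB j"]) (auto simp: truncB_def projG_def)
qed

end
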